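(* For $d\ge1$, let $A(d)$ be the sequence of the numbers $A(d,i,j)$, $0\le i\le d-1$, $1\le j\le d$, listed in increasing order of the pairs $(i,j)$ with respect to the total order $(i,j)<(i',j')$ iff $i<i'$, or $i=i'$ and $j>j'$. Then $A(d)$ is symmetric and unimodal; in particular its peak lies in the middle.
   Context: $S_d$ is the symmetric group on $[d]=\{1,\dots,d\}$. For $\sigma\in S_d$, $\mathrm{des}(\sigma)=\#\{i\in[d-1]:\sigma(i)>\sigma(i+1)\}$. For $0\le i\le d-1$ and $1\le j\le d$, $A(d,i,j)=\#\{\sigma\in S_d:\mathrm{des}(\sigma)=i,\ \sigma(1)=j\}$. A sequence $(s_0,\dots,s_N)$ is unimodal if $s_0\le\dots\le s_p\ge\dots\ge s_N$ for some $p$, and symmetric if $s_t=s_{N-t}$ for all $t$. *)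

theory Defs
  imports "HOL-Combinatorics.Permutations"
begin

definition des :: "nat \<Rightarrow> (nat \<Rightarrow> nat) \<Rightarrow> nat" where
  "des d \<sigma> = card {i \<in> {1..d-1}. \<sigma> i > \<sigma> (Suc i)}"

definition A :: "nat \<Rightarrow> nat \<Rightarrow> nat \<Rightarrow> nat" where
  "A d i j = card {\<sigma>. \<sigma> permutes {1..d} \<and> des d \<sigma> = i \<and> \<sigma> 1 = j}"

text \<open>The sequence A(d), indexed t = 0 .. d^2 - 1: the pairs (i,j) ordered by
  (i,j) < (i',j') iff i < i', or i = i' and j > j'. Position t corresponds to
  i = t div d and j = d - t mod d.\<close>
definition Aseq :: "nat \<Rightarrow> nat \<Rightarrow> nat" where
  "Aseq d t = A d (t div d) (d - t mod d)"

definition symmetric_seq :: "(nat \<Rightarrow> nat) \<Rightarrow> nat \<Rightarrow> bool" where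
  "symmetric_seq s N \<longleftrightarrow> (\<forall>t\<le>N. s t = s (N - t))"

definition unimodal_at :: "(nat \<Rightarrow> nat) \<Rightarrow> nat \<Rightarrow> nat \<Rightarrow> bool" where
  "unimodal_at s N p \<longleftrightarrow> p \<le> N \<and> (\<forall>t<p. s t \<le> s (Suc t)) \<and> (\<forall>t. p \<le> t \<and> t < N \<longrightarrow> s (Suc t) \<le> s t)"

definition unimodal_seq :: "(nat \<Rightarrow> nat) \<Rightarrow> nat \<Rightarrow> bool" where
  "unimodal_seq s N \<longleftrightarrow> (\<exists>p. unimodal_at s N p)"

end

theory Submission
  imports Defs "HOL-Combinatorics.Multiset_Permutations"
begin

(* Let eul n i r count the arrangements of an n-element set
   of naturals with i descents whose first letter is the element of rank r (0-based).
   Deleting the first letter gives the recursion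
     eul (n+1) i r = sum_{k<n} (if k < r then eul n (i-1) k else eul n i k),
   and A(d,i,j) = eul d i (j-1), so position t = i*d + q of the sequence A(d) carries
   eul d i (d-1-q). *)

section \<open>Symmetric sequences that rise up to their middle\<close>

definition rises_to_middle :: "(nat \<Rightarrow> nat) \<Rightarrow> nat \<Rightarrow> bool" where
  "rises_to_middle s N \<longleftrightarrow> (\<forall>t. 2 * t + 1 \<le> N \<longrightarrow> s t \<le> s (Suc t))"

text \<open>Elimination form of symmetry, instantiated one position at a time (the unfolded
  definition would make the simplifier loop).\<close>
lemma symmetric_seqD: "symmetric_seq s N \<Longrightarrow> t \<le> N \<Longrightarrow> s t = s (N - t)"
  unfolding symmetric_seq_def by blast

lemma symmetric_rising_mono:
  assumes sym: "symmetric_seq s N" and rise: "rises_to_middle s N"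
    and "u \<le> v" "u + v \<le> N"
  shows "s u \<le> s v"
  using assms(3,4)
proof (induction v rule: less_induct)
  case (less v)
  show ?case
  proof (cases "u = v")
    case True
    then show ?thesis by simp
  next
    case False
    then have uv: "u < v" using less.prems by simp
    show ?thesis
    proof (cases "2 * (v - 1) + 1 \<le> N")
      case True
      have "s (v - 1) \<le> s (Suc (v - 1))" using True rise by (simp add: rises_to_middle_def)
      moreover have "s u \<le> s (v - 1)" using less.IH[of "v - 1"] uv less.prems by simp
      ultimately show ?thesis using uv by simp
    next
      case False
      then have "N - v < v" using uv by arith
      then have "s u \<le> s (N - v)" using less.IH[of "N - v"] less.prems by simp
      also have "\<dots> = s v" using symmetric_seqD[OF sym, of v] less.prems by simp
      finally show ?thesis .
    qed
  qed
qed

lemma symmetric_rising_unimodal: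
  assumes sym: "symmetric_seq s N" and rise: "rises_to_middle s N"
  shows "unimodal_at s N (N div 2)"
  unfolding unimodal_at_def
proof (intro conjI allI impI)
  show "N div 2 \<le> N" by simp
next
  fix t assume "t < N div 2"
  then have "2 * t + 1 \<le> N" by linarith
  then show "s t \<le> s (Suc t)" using rise by (simp add: rises_to_middle_def)
next
  fix t assume t: "N div 2 \<le> t \<and> t < N"
  have "s (Suc t) = s (N - Suc t)" using symmetric_seqD[OF sym, of "Suc t"] t by simp
  also have "\<dots> \<le> s t" by (rule symmetric_rising_mono[OF sym rise]) (use t in linarith)+
  finally show "s (Suc t) \<le> s t" .
qed

section \<open>Ranks in a finite set\<close>

definition rank :: "nat set \<Rightarrow> nat \<Rightarrow> nat" where
  "rank S x = card {y \<in> S. y < x}"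

lemma rank_mono:
  assumes "finite S" "y \<in> S" "y < z"
  shows "rank S y < rank S z"
  unfolding rank_def by (rule psubset_card_mono) (use assms in auto)

text \<open>Ranking is an order-preserving bijection onto \<open>{0..<card S}\<close>; it is the
  change of variables from the elements of a set to the indices of \<open>eul\<close>.\<close>
lemma rank_bij:
  assumes "finite S"
  shows "bij_betw (rank S) S {..<card S}"
proof -
  have inj: "inj_on (rank S) S"
    by (rule inj_onI) (metis assms rank_mono less_irrefl linorder_neqE_nat)
  have "rank S x < card S" if "x \<in> S" for x
    unfolding rank_def by (rule psubset_card_mono) (use assms that in auto)
  then have sub: "rank S ` S \<subseteq> {..<card S}" by auto
  have "card (rank S ` S) = card {..<card S}" using card_image[OF inj] by simp
  then have "rank S ` S = {..<card S}" using sub by (simp add: card_subset_eq)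
  with inj show ?thesis by (simp add: bij_betw_def)
qed

lemma rank_Diff_less_iff:
  assumes "finite S" "x \<in> S" "y \<in> S - {x}"
  shows "rank (S - {x}) y < rank S x \<longleftrightarrow> y < x"
proof (cases "y < x")
  case True
  have "{w \<in> S - {x}. w < y} \<subset> {w \<in> S. w < x}" using True assms by auto
  then show ?thesis using True assms(1) by (simp add: rank_def psubset_card_mono)
next
  case False
  have "rank S x \<le> rank (S - {x}) y"
    unfolding rank_def by (rule card_mono) (use False assms in auto)
  then show ?thesis using False by simp
qed

section \<open>Descents of arrangements and the refined Eulerian numbers\<close>

fun list_des :: "nat list \<Rightarrow> nat" where
  "list_des (x # y # ys) = (if y < x then 1 else 0) + list_des (y # ys)"
| "list_des _ = 0"

lemma list_des_Cons: "ys \<noteq> [] \<Longrightarrow> list_des (x # ys) = (if hd ys < x then 1 else 0) + list_des ys"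
  by (cases ys) auto

definition list_count :: "nat set \<Rightarrow> nat \<Rightarrow> nat \<Rightarrow> nat" where
  "list_count S i x = card {xs \<in> permutations_of_set S. list_des xs = i \<and> hd xs = x}"

fun eul :: "nat \<Rightarrow> nat \<Rightarrow> nat \<Rightarrow> nat" where
  "eul 0 i r = 0"
| "eul (Suc 0) i r = (if i = 0 then 1 else 0)"
| "eul (Suc (Suc n)) i r =
     (\<Sum>k<Suc n. if k < r then (case i of 0 \<Rightarrow> 0 | Suc i' \<Rightarrow> eul (Suc n) i' k)
                 else eul (Suc n) i k)"

lemma permutations_of_set_hd:
  assumes "x \<in> S"
  shows "{xs \<in> permutations_of_set S. hd xs = x} = (#) x ` permutations_of_set (S - {x})"
proof (rule set_eqI, rule iffI)
  fix xs assume xs: "xs \<in> {xs \<in> permutations_of_set S. hd xs = x}"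
  then have "set xs = S" "distinct xs" "hd xs = x" by (auto dest: permutations_of_setD)
  moreover from this have "xs \<noteq> []" using assms by auto
  ultimately obtain ys where ys: "xs = x # ys" "set ys = S - {x}" "distinct ys"
    by (cases xs) auto
  then have "ys \<in> permutations_of_set (S - {x})" by (intro permutations_of_setI)
  then show "xs \<in> (#) x ` permutations_of_set (S - {x})" using ys(1) by (rule rev_image_eqI)
next
  fix xs assume "xs \<in> (#) x ` permutations_of_set (S - {x})"
  then obtain ys where ys: "xs = x # ys" "set ys = S - {x}" "distinct ys"
    by (auto dest: permutations_of_setD)
  have "set (x # ys) = S" "distinct (x # ys)" using ys(2,3) assms by auto
  then have "x # ys \<in> permutations_of_set S" by (rule permutations_of_setI)
  then show "xs \<in> {xs \<in> permutations_of_set S. hd xs = x}" using ys(1) by simp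
qed

text \<open>Arrangements of \<open>T\<close> prefixed by a letter \<open>x\<close>, sorted by their first letter
  \<open>y\<close>: the prefix creates a descent exactly when \<open>y < x\<close>.\<close>
lemma card_Cons_des:
  assumes "T \<noteq> {}"
  shows "card {ys \<in> permutations_of_set T. list_des (x # ys) = i \<and> hd ys = y}
         = (if y < x then (case i of 0 \<Rightarrow> 0 | Suc i' \<Rightarrow> list_count T i' y)
            else list_count T i y)"
proof -
  have ne: "ys \<noteq> []" if "ys \<in> permutations_of_set T" for ys
    using that assms by (auto dest: permutations_of_setD)
  have eq: "{ys \<in> permutations_of_set T. list_des (x # ys) = i \<and> hd ys = y}
            = {ys \<in> permutations_of_set T. (if y < x then 1 else 0) + list_des ys = i \<and> hd ys = y}"
    using ne list_des_Cons by fastforce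
  show ?thesis
  proof (cases "y < x")
    case True
    show ?thesis
    proof (cases i)
      case 0
      then show ?thesis unfolding eq using True by simp
    next
      case (Suc i')
      then have "{ys \<in> permutations_of_set T. (if y < x then 1 else 0) + list_des ys = i \<and> hd ys = y}
                 = {ys \<in> permutations_of_set T. list_des ys = i' \<and> hd ys = y}" using True by auto
      then show ?thesis unfolding eq list_count_def using True Suc by simp
    qed
  next
    case False
    then show ?thesis unfolding eq list_count_def by simp
  qed
qed

lemma list_count_rec:
  assumes fin: "finite S" and xS: "x \<in> S" and c: "card S \<ge> 2"
  shows "list_count S i x = (\<Sum>y\<in>S - {x}.
           if y < x then (case i of 0 \<Rightarrow> 0 | Suc i' \<Rightarrow> list_count (S - {x}) i' y)
           else list_count (S - {x}) i y)"
proof -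
  let ?S' = "S - {x}"
  let ?T = "{ys \<in> permutations_of_set ?S'. list_des (x # ys) = i}"
  have "1 \<le> card ?S'" using fin xS c by simp
  then have S'ne: "?S' \<noteq> {}" by (metis card.empty not_one_le_zero)
  have "{xs \<in> permutations_of_set S. list_des xs = i \<and> hd xs = x}
        = {xs \<in> {xs \<in> permutations_of_set S. hd xs = x}. list_des xs = i}" by auto
  also have "\<dots> = (#) x ` ?T" unfolding permutations_of_set_hd[OF xS] by auto
  finally have "list_count S i x = card ?T"
    unfolding list_count_def by (simp add: card_image inj_on_def)
  also have "\<dots> = (\<Sum>y\<in>?S'. card {ys \<in> ?T. hd ys = y})"
  proof -
    have "hd ys \<in> ?S'" if "ys \<in> ?T" for ys
    proof -
      have "set ys = ?S'" using that by (simp add: permutations_of_set_def)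
      then show ?thesis using S'ne by (metis hd_in_set set_empty)
    qed
    then have "hd ` ?T \<subseteq> ?S'" by blast
    moreover have "finite ?T" "finite ?S'" using fin by simp_all
    ultimately show ?thesis unfolding card_eq_sum by (intro sum.group[symmetric])
  qed
  also have "\<dots> = (\<Sum>y\<in>?S'. if y < x then (case i of 0 \<Rightarrow> 0 | Suc i' \<Rightarrow> list_count ?S' i' y)
                   else list_count ?S' i y)"
  proof (rule sum.cong[OF refl])
    fix y
    have "{ys \<in> ?T. hd ys = y} = {ys \<in> permutations_of_set ?S'. list_des (x # ys) = i \<and> hd ys = y}"
      by auto
    then show "card {ys \<in> ?T. hd ys = y} = (if y < x then (case i of 0 \<Rightarrow> 0 | Suc i' \<Rightarrow>
                 list_count ?S' i' y) else list_count ?S' i y)"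
      using card_Cons_des[OF S'ne, of x i y] by simp
  qed
  finally show ?thesis .
qed

lemma list_count_eul:
  "finite S \<Longrightarrow> card S = n \<Longrightarrow> x \<in> S \<Longrightarrow> list_count S i x = eul n i (rank S x)"
proof (induction n arbitrary: S x i)
  case 0
  then show ?case by auto
next
  case (Suc n)
  note fin = Suc.prems(1) and cS = Suc.prems(2) and xS = Suc.prems(3)
  show ?case
  proof (cases n)
    case 0
    then have "S = {x}" using cS xS by (metis One_nat_def card_1_singletonE singletonD)
    then have "{xs \<in> permutations_of_set S. list_des xs = i \<and> hd xs = x}
               = (if i = 0 then {[x]} else {})" by auto
    then show ?thesis using 0 by (simp add: list_count_def)
  next
    case (Suc m)
    let ?S' = "S - {x}"
    let ?g = "\<lambda>k. if k < rank S x then (case i of 0 \<Rightarrow> 0 | Suc i' \<Rightarrow> eul n i' k) else eul n i k"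
    have fin': "finite ?S'" and c': "card ?S' = n" using fin cS xS by auto
    have "list_count S i x = (\<Sum>y\<in>?S'. if y < x then (case i of 0 \<Rightarrow> 0 | Suc i' \<Rightarrow>
            list_count ?S' i' y) else list_count ?S' i y)"
      using list_count_rec[OF fin xS] cS Suc by simp
    also have "\<dots> = (\<Sum>y\<in>?S'. ?g (rank ?S' y))"
    proof (rule sum.cong[OF refl])
      fix y assume yS: "y \<in> ?S'"
      have "list_count ?S' j y = eul n j (rank ?S' y)" for j
        using Suc.IH fin' c' yS by blast
      then show "(if y < x then (case i of 0 \<Rightarrow> 0 | Suc i' \<Rightarrow> list_count ?S' i' y)
                  else list_count ?S' i y) = ?g (rank ?S' y)"
        using rank_Diff_less_iff[OF fin xS yS] by (simp split: nat.split)
    qed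
    also have "\<dots> = (\<Sum>k<n. ?g k)"
      using sum.reindex_bij_betw[OF rank_bij[OF fin']] c' by simp
    also have "\<dots> = eul (Suc n) i (rank S x)" unfolding Suc eul.simps(3) by (rule refl)
    finally show ?thesis .
  qed
qed

section \<open>From permutations of \<open>{1..d}\<close> to arrangements\<close>

lemma list_des_upt: "list_des (map f [a..<b]) = card {k. a \<le> k \<and> Suc k < b \<and> f (Suc k) < f k}"
proof (induction "b - a" arbitrary: a)
  case 0
  then have e: "{k. a \<le> k \<and> Suc k < b \<and> f (Suc k) < f k} = {}" by auto
  have u: "[a..<b] = []" using 0 by simp
  show ?case unfolding e u by simp
next
  case (Suc m)
  show ?case
  proof (cases "Suc a < b")
    case False
    then have e: "{k. a \<le> k \<and> Suc k < b \<and> f (Suc k) < f k} = {}" by auto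
    have u: "[a..<b] = [a]" using False Suc(2) by (simp add: upt_rec)
    show ?thesis unfolding e u by simp
  next
    case True
    let ?D = "\<lambda>a. {k. a \<le> k \<and> Suc k < b \<and> f (Suc k) < f k}"
    have ua: "[a..<b] = a # [Suc a..<b]" using True by (simp add: upt_rec)
    have ne: "map f [Suc a..<b] \<noteq> []" using True by simp
    have hd: "hd (map f [Suc a..<b]) = f (Suc a)" using True by (simp add: upt_rec)
    have IH: "list_des (map f [Suc a..<b]) = card (?D (Suc a))" using Suc by simp
    have D: "?D a = (if f (Suc a) < f a then insert a else id) (?D (Suc a))"
      using True by (auto simp: le_eq_less_or_eq)
    have "finite (?D (Suc a))" by (rule finite_subset[of _ "{..<b}"]) auto
    then show ?thesis unfolding ua list.map(2) list_des_Cons[OF ne] hd IH D by simp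
  qed
qed

lemma des_list_des: "des d \<sigma> = list_des (map \<sigma> [1..<Suc d])"
proof -
  have "{i \<in> {1..d-1}. \<sigma> i > \<sigma> (Suc i)} = {k. 1 \<le> k \<and> Suc k < Suc d \<and> \<sigma> (Suc k) < \<sigma> k}"
    by auto
  then show ?thesis unfolding des_def list_des_upt by simp
qed

lemma permutes_one_line_bij:
  "bij_betw (\<lambda>\<sigma>. map \<sigma> [1..<Suc d]) {\<sigma>. \<sigma> permutes {1..d}} (permutations_of_set {1..d})"
proof -
  let ?P = "{\<sigma>. \<sigma> permutes {1..d}}"
  let ?f = "\<lambda>\<sigma>. map \<sigma> [1..<Suc d]"
  have inj: "inj_on ?f ?P"
  proof (rule inj_onI)
    fix \<sigma> \<tau> assume s: "\<sigma> \<in> ?P" and t: "\<tau> \<in> ?P" and eq: "?f \<sigma> = ?f \<tau>"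
    have "\<forall>k\<in>{1..d}. \<sigma> k = \<tau> k"
      using eq by (simp only: map_eq_conv set_upt atLeastLessThanSuc_atLeastAtMost)
    then have "\<sigma> k = \<tau> k" if "k \<in> {1..d}" for k using that by blast
    moreover have "\<sigma> k = \<tau> k" if "k \<notin> {1..d}" for k
      using permutes_not_in[of \<sigma> "{1..d}" k] permutes_not_in[of \<tau> "{1..d}" k] s t that
      by simp
    ultimately show "\<sigma> = \<tau>" by blast
  qed
  have ups: "[1..<Suc d] \<in> permutations_of_set {1..d}" by (rule permutations_of_setI) auto
  have sub: "?f ` ?P \<subseteq> permutations_of_set {1..d}"
  proof
    fix xs assume "xs \<in> ?f ` ?P"
    then obtain \<sigma> where s: "\<sigma> permutes {1..d}" and xs: "xs = ?f \<sigma>" by auto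
    have "xs \<in> map \<sigma> ` permutations_of_set {1..d}" using xs ups by auto
    then show "xs \<in> permutations_of_set {1..d}"
      using permutations_of_set_image_permutes[OF s] by simp
  qed
  have "card (?f ` ?P) = card ?P" by (rule card_image[OF inj])
  also have "\<dots> = fact d" using card_permutations[of "{1..d}" d] by simp
  finally have "card (?f ` ?P) = card (permutations_of_set {1..d})" by simp
  then have "?f ` ?P = permutations_of_set {1..d}" using sub by (simp add: card_subset_eq)
  then show ?thesis using inj by (simp add: bij_betw_def)
qed

lemma A_eq_list_count:
  assumes "d \<ge> 1"
  shows "A d i j = list_count {1..d} i j"
proof -
  let ?P = "{\<sigma>. \<sigma> permutes {1..d}}"
  let ?f = "\<lambda>\<sigma>. map \<sigma> [1..<Suc d]"
  let ?Q = "\<lambda>xs. list_des xs = i \<and> hd xs = j"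
  have hd: "hd (?f \<sigma>) = \<sigma> 1" for \<sigma> using assms by (simp add: upt_conv_Cons del: upt_Suc)
  have setA: "{\<sigma>. \<sigma> permutes {1..d} \<and> des d \<sigma> = i \<and> \<sigma> 1 = j} = {\<sigma>\<in>?P. ?Q (?f \<sigma>)}"
  proof (rule Collect_cong)
    fix \<sigma>
    show "(\<sigma> permutes {1..d} \<and> des d \<sigma> = i \<and> \<sigma> 1 = j) = (\<sigma> \<in> ?P \<and> ?Q (?f \<sigma>))"
      unfolding hd des_list_des[of d \<sigma>] by simp
  qed
  have bij: "bij_betw ?f ?P (permutations_of_set {1..d})" by (rule permutes_one_line_bij)
  have inj: "inj_on ?f {\<sigma>\<in>?P. ?Q (?f \<sigma>)}"
    using bij unfolding bij_betw_def by (rule inj_on_subset[OF conjunct1]) auto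
  have im: "?f ` ?P = permutations_of_set {1..d}" using bij by (rule bij_betw_imp_surj_on)
  have "?f ` {\<sigma>\<in>?P. ?Q (?f \<sigma>)} = {xs \<in> permutations_of_set {1..d}. ?Q xs}"
    unfolding im[symmetric] by blast
  then show ?thesis unfolding A_def list_count_def setA using card_image[OF inj] by simp
qed

lemma A_eq_eul:
  assumes "1 \<le> j" "j \<le> d"
  shows "A d i j = eul d i (j - 1)"
proof -
  have "{y \<in> {1..d}. y < j} = {1..<j}" using assms by auto
  then have "rank {1..d} j = j - 1" unfolding rank_def by simp
  then show ?thesis using A_eq_list_count list_count_eul[of "{1..d}" d j] assms by simp
qed

section \<open>Identities for the refined Eulerian numbers\<close>

text \<open>An \<open>n\<close>-letter arrangement has fewer than \<open>n\<close> descents.\<close>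
lemma eul_vanish: "n \<le> i \<Longrightarrow> eul n i r = 0"
  by (induction n i r rule: eul.induct) (auto split: nat.split intro!: sum.neutral)

text \<open>Symmetry (combinatorially: complementing the letters swaps ascents and descents and
  reverses ranks); proved from the recursion by induction, reindexing \<open>k \<mapsto> n - k\<close>.\<close>
lemma eul_sym: "i \<le> n \<Longrightarrow> r \<le> n \<Longrightarrow> eul (Suc n) i r = eul (Suc n) (n - i) (n - r)"
proof (induction n arbitrary: i r)
  case 0
  then show ?case by simp
next
  case (Suc n)
  let ?g = "\<lambda>k. if k < r then (case i of 0 \<Rightarrow> 0 | Suc i' \<Rightarrow> eul (Suc n) i' k)
                else eul (Suc n) i k"
  let ?h = "\<lambda>k. if k < Suc n - r then (case Suc n - i of 0 \<Rightarrow> 0 | Suc i' \<Rightarrow> eul (Suc n) i' k)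
                else eul (Suc n) (Suc n - i) k"
  have hg: "?h (n - k) = ?g k" if "k \<le> n" for k
  proof -
    have c: "(n - k < Suc n - r) = (\<not> k < r)" using that Suc.prems by auto
    show ?thesis
    proof (cases "k < r")
      case True
      then show ?thesis
        using c Suc.IH[of _ k] Suc.prems that eul_vanish[of "Suc n" "Suc n" "n - k"]
        by (cases i) auto
    next
      case False
      then show ?thesis
        using c Suc.IH[of i k] Suc.prems that eul_vanish[of "Suc n" i k]
        by (cases "i = Suc n") (auto simp: Suc_diff_le)
    qed
  qed
  have "eul (Suc (Suc n)) (Suc n - i) (Suc n - r) = (\<Sum>k<Suc n. ?h k)"
    by (simp only: eul.simps(3))
  also have "\<dots> = (\<Sum>k<Suc n. ?h (Suc n - Suc k))" by (rule sum.nat_diff_reindex[symmetric])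
  also have "\<dots> = (\<Sum>k<Suc n. ?g k)"
  proof (rule sum.cong[OF refl])
    fix k assume "k \<in> {..<Suc n}"
    then show "?h (Suc n - Suc k) = ?g k" using hg[of k] by (simp only: diff_Suc_Suc) simp
  qed
  also have "\<dots> = eul (Suc (Suc n)) i r" by (simp only: eul.simps(3))
  finally show ?case ..
qed

text \<open>The last entry of block \<open>i\<close> equals the first entry of block \<open>i+1\<close>:
  both count all arrangements whose first letter is smallest resp. largest.\<close>
lemma eul_block_boundary:
  assumes "1 \<le> m"
  shows "eul (Suc m) i 0 = eul (Suc m) (Suc i) m"
proof -
  obtain n where m: "m = Suc n" using assms by (cases m) auto
  show ?thesis unfolding m by (simp only: eul.simps(3)) simp
qed

text \<open>Raising the rank of the first letter from \<open>r\<close> to \<open>r+1\<close> affects only the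
  arrangements whose second letter has rank \<open>r\<close>: these gain a descent.\<close>
lemma eul_rank_step:
  assumes "r < m"
  shows "eul (Suc m) i (Suc r) + eul m i r
         = eul (Suc m) i r + (case i of 0 \<Rightarrow> 0 | Suc i' \<Rightarrow> eul m i' r)"
proof -
  obtain n where m: "m = Suc n" using assms by (cases m) auto
  let ?g = "\<lambda>s k. if k < s then (case i of 0 \<Rightarrow> 0 | Suc i' \<Rightarrow> eul m i' k) else eul m i k"
  have split: "sum (?g s) {..<m} = ?g s r + sum (?g s) ({..<m} - {r})" for s
    using assms by (simp add: sum.remove)
  have rest: "sum (?g (Suc r)) ({..<m} - {r}) = sum (?g r) ({..<m} - {r})"
    by (rule sum.cong) auto
  have "eul (Suc m) i s = sum (?g s) {..<m}" for s unfolding m by (simp only: eul.simps(3))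
  then show ?thesis using split[of r] split[of "Suc r"] rest by simp
qed

section \<open>The sequence of refined Eulerian numbers\<close>

definition eul_seq :: "nat \<Rightarrow> nat \<Rightarrow> nat" where
  "eul_seq d t = eul d (t div d) (d - 1 - t mod d)"

lemma eul_seq_block: "q < d \<Longrightarrow> eul_seq d (i * d + q) = eul d i (d - 1 - q)"
  by (simp add: eul_seq_def)

lemma Aseq_eq_eul_seq:
  assumes "1 \<le> d"
  shows "Aseq d = eul_seq d"
proof
  fix t
  have "t mod d < d" using assms by simp
  then have "A d (t div d) (d - t mod d) = eul d (t div d) (d - t mod d - 1)"
    by (intro A_eq_eul) auto
  then show "Aseq d t = eul_seq d t" by (simp add: Aseq_def eul_seq_def diff_commute)
qed

text \<open>Reversing the positions reflects block and offset, so the symmetry of \<open>eul\<close>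
  makes the sequence symmetric.\<close>
lemma eul_seq_symmetric:
  assumes "1 \<le> d"
  shows "symmetric_seq (eul_seq d) (d * d - 1)"
  unfolding symmetric_seq_def
proof (intro allI impI)
  fix t assume t: "t \<le> d * d - 1"
  define i q where "i = t div d" and "q = t mod d"
  have tq: "t = i * d + q" and q: "q < d" using assms by (simp_all add: i_def q_def)
  have "i * d \<le> t" "1 \<le> d * d" using assms tq by simp_all
  then have "i * d < d * d" using t by linarith
  then have i: "i < d" by simp
  have "(d - 1 - i) * d + i * d = (d - 1) * d" using i by (simp flip: add_mult_distrib)
  moreover have "(d - 1) * d + d = d * d" using assms by (cases d) auto
  ultimately have rt: "d * d - 1 - t = (d - 1 - i) * d + (d - 1 - q)" using t tq q by linarith
  obtain n where dn: "d = Suc n" using assms by (cases d) auto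
  have "eul_seq d t = eul d i (d - 1 - q)" unfolding tq using q by (rule eul_seq_block)
  also have "\<dots> = eul d (d - 1 - i) q" using eul_sym[of i n "n - q"] i q unfolding dn by simp
  also have "\<dots> = eul_seq d (d * d - 1 - t)"
  proof -
    have dq: "d - 1 - q < d" using assms by simp
    show ?thesis unfolding rt eul_seq_block[OF dq] using q by simp
  qed
  finally show "eul_seq d t = eul_seq d (d * d - 1 - t)" .
qed

text \<open>If position \<open>(i+1)(m+1) + q\<close> lies before the middle of the size-\<open>(m+1)\<close>
  sequence, then positions \<open>i m + q\<close> and \<open>(i+1) m + q\<close> of the size-\<open>m\<close> sequence
  lie symmetrically around a point before its middle.\<close>
lemma arith_below_middle:
  fixes i m q :: nat
  assumes "q < m" "2 * (Suc i * Suc m + q) + 2 \<le> Suc m * Suc m"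
  shows "i * m + q + Suc i * m + q + 1 \<le> m * m"
proof (cases "m \<le> 2 * i + 2")
  case True
  then show ?thesis using assms(2) by (simp add: algebra_simps)
next
  case False
  then have "(2 * i + 3) * m \<le> m * m" by (intro mult_right_mono) auto
  then show ?thesis using assms(1) by (simp add: algebra_simps)
qed

text \<open>Below the middle, adding a descent while keeping the rank of the first letter does
  not decrease the count: the two entries compare by the rising property of size \<open>m\<close>.\<close>
lemma eul_add_descent_le:
  assumes m: "1 \<le> m" and rise: "rises_to_middle (eul_seq m) (m * m - 1)"
    and q: "q < m" and pos: "2 * (Suc i * Suc m + q) + 2 \<le> Suc m * Suc m"
  shows "eul m i (m - Suc q) \<le> eul m (Suc i) (m - Suc q)"
proof -
  have "i * m + q + Suc i * m + q + 1 \<le> m * m" by (rule arith_below_middle[OF q pos])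
  then have "eul_seq m (i * m + q) \<le> eul_seq m (Suc i * m + q)"
    by (intro symmetric_rising_mono[OF eul_seq_symmetric[OF m] rise]) auto
  then show ?thesis unfolding eul_seq_block[OF q] by simp
qed

text \<open>Inside a block the increment is \<open>eul m i r - eul m (i-1) r\<close>, a comparison of two
  entries of the size-\<open>m\<close> sequence whose positions sum to less than its length.\<close>
lemma eul_seq_rises_Suc:
  assumes m: "1 \<le> m" and rise: "rises_to_middle (eul_seq m) (m * m - 1)"
  shows "rises_to_middle (eul_seq (Suc m)) (Suc m * Suc m - 1)"
  unfolding rises_to_middle_def
proof (intro allI impI)
  fix t assume t: "2 * t + 1 \<le> Suc m * Suc m - 1"
  define i q where "i = t div Suc m" and "q = t mod Suc m"
  have tq: "t = i * Suc m + q" unfolding i_def q_def by (rule div_mult_mod_eq[symmetric])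
  have qd: "q < Suc m" by (simp add: q_def)
  then consider "q = m" | "q < m" by linarith
  then show "eul_seq (Suc m) t \<le> eul_seq (Suc m) (Suc t)"
  proof cases
    case 1
    then have "Suc t = Suc i * Suc m + 0" using tq by simp
    then have "eul_seq (Suc m) (Suc t) = eul (Suc m) (Suc i) m"
      by (simp only: eul_seq_block[OF zero_less_Suc]) simp
    moreover have "eul_seq (Suc m) t = eul (Suc m) i 0"
      unfolding tq eul_seq_block[OF qd] using 1 by simp
    ultimately show ?thesis using eul_block_boundary[OF m, of i] by simp
  next
    case 2
    define r where "r = m - Suc q"
    have below: "(case i of 0 \<Rightarrow> 0 | Suc i' \<Rightarrow> eul m i' r) \<le> eul m i r"
    proof (cases i)
      case (Suc i')
      have "2 * (Suc i' * Suc m + q) + 2 \<le> Suc m * Suc m" using t tq Suc by simp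
      then show ?thesis using eul_add_descent_le[OF m rise 2] Suc r_def by simp
    qed simp
    have "eul_seq (Suc m) t = eul (Suc m) i (Suc r)"
      unfolding tq eul_seq_block[OF qd] r_def using 2 by (simp add: Suc_diff_Suc)
    moreover have "Suc q < Suc m" using 2 by simp
    then have "eul_seq (Suc m) (Suc t) = eul (Suc m) i r"
      using tq eul_seq_block[of "Suc q" "Suc m" i] r_def by simp
    moreover have "eul (Suc m) i (Suc r) \<le> eul (Suc m) i r"
      using eul_rank_step[of r m i] below 2 r_def by simp
    ultimately show ?thesis by simp
  qed
qed

lemma eul_seq_rises: "1 \<le> d \<Longrightarrow> rises_to_middle (eul_seq d) (d * d - 1)"
proof (induction d rule: nat_induct_at_least)
  case base
  then show ?case by (simp add: rises_to_middle_def)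
next
  case (Suc m)
  then show ?case by (rule eul_seq_rises_Suc)
qed

theorem corollary4p10:
  fixes d :: nat
  assumes "d \<ge> 1"
  shows "symmetric_seq (Aseq d) (d^2 - 1) \<and> unimodal_seq (Aseq d) (d^2 - 1)
         \<and> unimodal_at (Aseq d) (d^2 - 1) ((d^2 - 1) div 2)"
proof -
  have N: "d^2 - 1 = d * d - 1" by (simp add: power2_eq_square)
  have sym: "symmetric_seq (eul_seq d) (d * d - 1)" using eul_seq_symmetric assms by simp
  have rise: "rises_to_middle (eul_seq d) (d * d - 1)" using eul_seq_rises assms by simp
  have "unimodal_at (eul_seq d) (d * d - 1) ((d * d - 1) div 2)"
    by (rule symmetric_rising_unimodal[OF sym rise])
  then show ?thesis
    using sym Aseq_eq_eul_seq[OF assms] unfolding N unimodal_seq_def by auto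
qed

end
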